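(* Consider a network of $C$ devices of which a set $\mathcal{K}$ of $K\le C$ devices act as data aggregators, each aggregator $k$ producing a prediction $\Psi_k(X;\theta,\mathcal{G}(t))\in\mathcal{Y}$ (a probability vector over classes) for input $X$. Under the device fault dynamic network $\mathcal{G}_r(t)$ with fault rate $r\in[0,1]$ (each device is present independently with probability $1-r$), the active set $\mathcal{A}$ consists of the aggregators present at the final round, so $\Pr(|\mathcal{A}|=0)=r^K$. Let $h=h_{\mathrm{rand}}$ be the post-processing that outputs the prediction of a uniformly random active aggregator, and outputs the marginal label distribution $p(Y)$ if $\mathcal{A}=\emptyset$. Define the dynamic risk $R_h(\theta;\mathcal{G})=\mathbb{E}_{X,Y,\mathcal{G},h}[\ell(h(\Psi(X;\theta,\mathcal{G})),Y)]$ for a loss $\ell$. Assume that the risk of each aggregator's predictor with faults is at least its risk without faults (i.e., on the fault-free base graph $\mathcal{G}_{\mathrm{base}}$). Then $$R_h(\theta;\mathcal{G}_r(t))\;\ge\;(1-r^K)\,R_h(\theta;\mathcal{G}_{\mathrm{base}})\;+\;r^K\,\mathbb{E}\big[\ell(Y,p(Y))\big],$$ where $\mathbb{E}[\ell(Y,p(Y))]$ is the risk of the random predictor that outputs the marginal label distribution.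
   Context: Data: $(X,Y)\sim p(X,Y)$, features split across devices. The dynamic network $\mathcal{G}(t)=(\mathcal{C}(t),\mathcal{E}(t))$ changes over discrete communication rounds $t$; in the device fault dynamic network with base topology $\mathcal{G}_{\mathrm{base}}=(\mathcal{C}_{\mathrm{base}},\mathcal{E}_{\mathrm{base}})$, each device $c\in\mathcal{C}_{\mathrm{base}}$ is in $\mathcal{C}_r(t)$ with probability $1-r$ and $\mathcal{E}_r(t)$ consists of base edges between present devices. The active set at the final round $T$ is the set of aggregators able to communicate their prediction to the external entity collecting the final output. The risk with $h_{\mathrm{rand}}$ on $\mathcal{G}_{\mathrm{base}}$ equals the average over aggregators of their individual fault-free risks. *)

theory Defs
  imports "HOL-Probability.Probability"
begin

text \<open>A graph is a pair (device set, edge set). A network is a sequence of graphs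
  indexed by the communication round.\<close>
type_synonym 'c graph = "'c set \<times> ('c \<times> 'c) set"
type_synonym 'c network = "nat \<Rightarrow> 'c graph"

definition base_network :: "'c set \<Rightarrow> ('c \<times> 'c) set \<Rightarrow> 'c network" where
  "base_network Cb Eb = (\<lambda>t. (Cb, Eb))"

definition fault_graph :: "'c set \<Rightarrow> ('c \<times> 'c) set \<Rightarrow> (nat \<times> 'c \<Rightarrow> bool) \<Rightarrow> 'c network" where
  "fault_graph Cb Eb \<omega> t =
     (let C = {c \<in> Cb. \<omega> (t, c)} in (C, {(u, v) \<in> Eb. u \<in> C \<and> v \<in> C}))"

definition fault_network :: "'c set \<Rightarrow> ('c \<times> 'c) set \<Rightarrow> nat \<Rightarrow> real \<Rightarrow> 'c network pmf" where
  "fault_network Cb Eb T r =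
     map_pmf (fault_graph Cb Eb) (Pi_pmf ({0..T} \<times> Cb) False (\<lambda>_. bernoulli_pmf (1 - r)))"

definition active_set :: "'c set \<Rightarrow> nat \<Rightarrow> 'c network \<Rightarrow> 'c set" where
  "active_set Ks T G = Ks \<inter> fst (G T)"

text \<open>Random choice made by h_rand: None = no active aggregator (output marginal),
  Some k = uniformly random active aggregator k.\<close>
definition h_rand_choice :: "'c set \<Rightarrow> nat \<Rightarrow> 'c network \<Rightarrow> 'c option pmf" where
  "h_rand_choice Ks T G =
     (if active_set Ks T G = {} then return_pmf None
      else map_pmf Some (pmf_of_set (active_set Ks T G)))"

definition h_output ::
  "'y pmf \<Rightarrow> ('c \<Rightarrow> 'th \<Rightarrow> 'c network \<Rightarrow> 'x \<Rightarrow> 'y pmf) \<Rightarrow> 'th \<Rightarrow> 'c network \<Rightarrow> 'x \<Rightarrow> 'c option \<Rightarrow> 'y pmf" where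
  "h_output pY Psi \<theta> G x ch = (case ch of None \<Rightarrow> pY | Some k \<Rightarrow> Psi k \<theta> G x)"

definition dyn_risk ::
  "('y pmf \<Rightarrow> 'y \<Rightarrow> ennreal) \<Rightarrow> ('x \<times> 'y) measure \<Rightarrow> 'y pmf \<Rightarrow>
   ('c \<Rightarrow> 'th \<Rightarrow> 'c network \<Rightarrow> 'x \<Rightarrow> 'y pmf) \<Rightarrow> 'th \<Rightarrow> 'c set \<Rightarrow> nat \<Rightarrow> 'c network pmf \<Rightarrow> ennreal" where
  "dyn_risk loss D pY Psi \<theta> Ks T N =
     (\<integral>\<^sup>+ G. (\<integral>\<^sup>+ ch. (\<integral>\<^sup>+ z. loss (h_output pY Psi \<theta> G (fst z) ch) (snd z) \<partial>D)
        \<partial>measure_pmf (h_rand_choice Ks T G)) \<partial>measure_pmf N)"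

definition agg_risk ::
  "('y pmf \<Rightarrow> 'y \<Rightarrow> ennreal) \<Rightarrow> ('x \<times> 'y) measure \<Rightarrow>
   ('c \<Rightarrow> 'th \<Rightarrow> 'c network \<Rightarrow> 'x \<Rightarrow> 'y pmf) \<Rightarrow> 'th \<Rightarrow> 'c \<Rightarrow> 'c network \<Rightarrow> ennreal" where
  "agg_risk loss D Psi \<theta> k G = (\<integral>\<^sup>+ z. loss (Psi k \<theta> G (fst z)) (snd z) \<partial>D)"

end

theory Submission
  imports Defs "HOL-Combinatorics.Transposition"
begin

(* Under the fault model, the aggregator picked by h_rand is a mixture: with probability r^K no
   aggregator is present at round T; otherwise, because the independent presence indicators of the
   aggregators are exchangeable, every aggregator is picked with the same probability
   (1 - r^K)/K, i.e. (1 - r^K) times its probability on the fault-free network.  Integrating the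
   risk of the picked predictor against this mixture, after bounding each faulty risk below by the
   fault-free one, gives the inequality. *)

lemma map_Pi_pmf_comp_transpose:
  assumes "finite S" "x \<in> S" "y \<in> S"
  shows "map_pmf (\<lambda>\<omega>. \<omega> \<circ> Transposition.transpose x y) (Pi_pmf S d (\<lambda>_. q))
           = Pi_pmf S d (\<lambda>_. q)"
  using assms by (intro Pi_pmf_bij_betw[symmetric]) (auto simp: Transposition.transpose_def)

lemma prob_Pi_pmf_bernoulli_all_False:
  assumes "finite S" "J \<subseteq> S" "0 \<le> p" "p \<le> 1"
  shows "measure_pmf.prob (Pi_pmf S d (\<lambda>_. bernoulli_pmf p)) {\<omega>. \<forall>x\<in>J. \<not> \<omega> x}
           = (1 - p) ^ card J"
proof -
  have "{\<omega>. \<forall>x\<in>J. \<not> \<omega> x} = Pi S (\<lambda>x. if x \<in> J then {False} else UNIV)"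
    using assms(2) by (auto simp: Pi_def)
  then have "measure_pmf.prob (Pi_pmf S d (\<lambda>_. bernoulli_pmf p)) {\<omega>. \<forall>x\<in>J. \<not> \<omega> x}
      = (\<Prod>x\<in>S. if x \<in> J then 1 - p else 1)"
    using assms by (simp add: measure_Pi_pmf_Pi measure_pmf_single if_distrib cong: if_cong)
  also have "\<dots> = (1 - p) ^ card J"
    using assms(1,2) by (simp add: prod.If_cases Int_absorb1)
  finally show ?thesis .
qed

lemma active_set_fault_graph:
  assumes "Ks \<subseteq> Cb"
  shows "active_set Ks T (fault_graph Cb Eb \<omega>) = {k \<in> Ks. \<omega> (T, k)}"
  using assms by (auto simp: active_set_def fault_graph_def Let_def)

lemma active_set_base_network:
  assumes "Ks \<subseteq> Cb"
  shows "active_set Ks T (base_network Cb Eb) = Ks"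
  using assms by (auto simp: active_set_def base_network_def)

lemma active_set_fault_graph_comp_transpose:
  assumes "Ks \<subseteq> Cb" "k \<in> Ks" "k' \<in> Ks"
  shows "active_set Ks T (fault_graph Cb Eb (\<omega> \<circ> Transposition.transpose (T, k) (T, k')))
           = Transposition.transpose k k' ` active_set Ks T (fault_graph Cb Eb \<omega>)"
  using assms
  by (auto simp: active_set_fault_graph Transposition.transpose_def image_iff split: if_splits)

lemma set_pmf_h_rand_choice:
  assumes "finite Ks"
  shows "set_pmf (h_rand_choice Ks T G) \<subseteq> insert None (Some ` active_set Ks T G)"
  using assms by (auto simp: h_rand_choice_def active_set_def)

lemma pmf_h_rand_choice_None:
  "pmf (h_rand_choice Ks T G) None = (if active_set Ks T G = {} then 1 else 0)"
  by (auto simp: h_rand_choice_def pmf_eq_0_set_pmf)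

lemma pmf_h_rand_choice_Some:
  assumes "finite Ks"
  shows "pmf (h_rand_choice Ks T G) (Some k)
     = (if k \<in> active_set Ks T G then 1 / card (active_set Ks T G) else 0)"
  using assms by (auto simp: h_rand_choice_def pmf_map_inj' active_set_def)

lemma set_pmf_bind_h_rand_choice:
  assumes "finite Ks"
  shows "set_pmf (bind_pmf N (h_rand_choice Ks T)) \<subseteq> insert None (Some ` Ks)"
  using set_pmf_h_rand_choice[OF assms] by (auto simp: active_set_def)

lemma pmf_bind_fault_network:
  "pmf (bind_pmf (fault_network Cb Eb T r) f) x
     = measure_pmf.expectation (Pi_pmf ({0..T} \<times> Cb) False (\<lambda>_. bernoulli_pmf (1 - r)))
         (\<lambda>\<omega>. pmf (f (fault_graph Cb Eb \<omega>)) x)"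
  by (simp add: fault_network_def pmf_bind)

lemma pmf_h_rand_choice_fault_network_None:
  assumes "finite Cb" "Ks \<subseteq> Cb" "0 \<le> r" "r \<le> 1"
  shows "pmf (bind_pmf (fault_network Cb Eb T r) (h_rand_choice Ks T)) None = r ^ card Ks"
proof -
  have "(\<lambda>\<omega>. pmf (h_rand_choice Ks T (fault_graph Cb Eb \<omega>)) None)
          = indicator {\<omega>. \<forall>x\<in>{T} \<times> Ks. \<not> \<omega> x}"
    using assms(2)
    by (auto simp: pmf_h_rand_choice_None active_set_fault_graph fun_eq_iff split: split_indicator)
  then have "pmf (bind_pmf (fault_network Cb Eb T r) (h_rand_choice Ks T)) None
      = measure_pmf.prob (Pi_pmf ({0..T} \<times> Cb) False (\<lambda>_. bernoulli_pmf (1 - r)))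
          {\<omega>. \<forall>x\<in>{T} \<times> Ks. \<not> \<omega> x}"
    by (simp add: pmf_bind_fault_network)
  also have "\<dots> = r ^ card Ks"
    using assms by (subst prob_Pi_pmf_bernoulli_all_False) (auto simp: card_cartesian_product)
  finally show ?thesis .
qed

lemma pmf_h_rand_choice_fault_network_Some_swap:
  assumes "finite Cb" "Ks \<subseteq> Cb" "k \<in> Ks" "k' \<in> Ks"
  shows "pmf (bind_pmf (fault_network Cb Eb T r) (h_rand_choice Ks T)) (Some k)
           = pmf (bind_pmf (fault_network Cb Eb T r) (h_rand_choice Ks T)) (Some k')"
proof -
  define P where "P = Pi_pmf ({0..T} \<times> Cb) False (\<lambda>_. bernoulli_pmf (1 - r))"
  define \<sigma> where "\<sigma> = Transposition.transpose (T, k) (T, k')"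
  define F where "F = (\<lambda>j \<omega>. pmf (h_rand_choice Ks T (fault_graph Cb Eb \<omega>)) (Some j))"
  have finite_Ks: "finite Ks"
    using assms(1,2) finite_subset by blast
  have F_swap: "F k (\<omega> \<circ> \<sigma>) = F k' \<omega>" for \<omega>
  proof -
    let ?A = "active_set Ks T (fault_graph Cb Eb \<omega>)"
    have "active_set Ks T (fault_graph Cb Eb (\<omega> \<circ> \<sigma>)) = Transposition.transpose k k' ` ?A"
      unfolding \<sigma>_def using assms(2-4) by (rule active_set_fault_graph_comp_transpose)
    moreover have "k \<in> Transposition.transpose k k' ` ?A \<longleftrightarrow> k' \<in> ?A"
      by (auto simp: image_iff Transposition.transpose_def split: if_splits)
    ultimately show ?thesis
      using finite_Ks by (simp add: F_def pmf_h_rand_choice_Some card_image)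
  qed
  have "map_pmf (\<lambda>\<omega>. \<omega> \<circ> \<sigma>) P = P"
    unfolding P_def \<sigma>_def using assms by (intro map_Pi_pmf_comp_transpose) auto
  then have "measure_pmf.expectation P (F k) = measure_pmf.expectation P (\<lambda>\<omega>. F k (\<omega> \<circ> \<sigma>))"
    by (metis integral_map_pmf)
  also have "\<dots> = measure_pmf.expectation P (F k')"
    by (simp add: F_swap)
  finally show ?thesis
    unfolding pmf_bind_fault_network P_def[symmetric] F_def .
qed

lemma pmf_h_rand_choice_fault_network_Some:
  assumes "finite Cb" "Ks \<subseteq> Cb" "0 \<le> r" "r \<le> 1" "k \<in> Ks"
  shows "pmf (bind_pmf (fault_network Cb Eb T r) (h_rand_choice Ks T)) (Some k)
           = (1 - r ^ card Ks) / card Ks"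
proof -
  define Q where "Q = bind_pmf (fault_network Cb Eb T r) (h_rand_choice Ks T)"
  have finite_Ks: "finite Ks"
    using assms(1,2) finite_subset by blast
  have "1 = (\<Sum>ch\<in>insert None (Some ` Ks). pmf Q ch)"
    using finite_Ks set_pmf_bind_h_rand_choice[OF finite_Ks]
    by (intro sum_pmf_eq_1[symmetric]) (auto simp: Q_def)
  also have "\<dots> = r ^ card Ks + (\<Sum>j\<in>Ks. pmf Q (Some j))"
    using finite_Ks assms by (simp add: sum.reindex pmf_h_rand_choice_fault_network_None Q_def)
  also have "(\<Sum>j\<in>Ks. pmf Q (Some j)) = (\<Sum>j\<in>Ks. pmf Q (Some k))"
    unfolding Q_def using pmf_h_rand_choice_fault_network_Some_swap[OF assms(1,2) _ assms(5)]
    by (intro sum.cong) auto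
  finally have "card Ks * pmf Q (Some k) = 1 - r ^ card Ks"
    by simp
  moreover have "card Ks > 0"
    using assms(5) finite_Ks by (auto simp: card_gt_0_iff)
  ultimately show ?thesis
    unfolding Q_def by (simp add: field_simps)
qed

lemma h_rand_choice_fault_network:
  assumes "finite Cb" "Ks \<subseteq> Cb" "0 \<le> r" "r \<le> 1"
  shows "bind_pmf (fault_network Cb Eb T r) (h_rand_choice Ks T)
           = bind_pmf (bernoulli_pmf (r ^ card Ks))
               (\<lambda>nobody. if nobody then return_pmf None
                          else h_rand_choice Ks T (base_network Cb Eb))"
    (is "?Q = bind_pmf _ (\<lambda>nobody. if nobody then _ else ?Q\<^sub>0)")
proof (rule pmf_eqI)
  fix ch
  have finite_Ks: "finite Ks"
    using assms(1,2) finite_subset by blast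
  have "0 \<le> r ^ card Ks" "r ^ card Ks \<le> 1"
    using assms(3,4) by (auto intro: power_le_one)
  then have mixture: "pmf (bind_pmf (bernoulli_pmf (r ^ card Ks))
        (\<lambda>nobody. if nobody then return_pmf None else ?Q\<^sub>0)) ch
      = r ^ card Ks * pmf (return_pmf None) ch + (1 - r ^ card Ks) * pmf ?Q\<^sub>0 ch"
    by (simp add: pmf_bind)
  have "pmf ?Q ch = r ^ card Ks * pmf (return_pmf None) ch + (1 - r ^ card Ks) * pmf ?Q\<^sub>0 ch"
  proof (cases ch)
    case None
    then show ?thesis
      using assms(2)
      by (simp add: pmf_h_rand_choice_fault_network_None[OF assms] pmf_h_rand_choice_None
          active_set_base_network)
  next
    case (Some k)
    show ?thesis
    proof (cases "k \<in> Ks")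
      case True
      then show ?thesis
        using assms(2) finite_Ks Some
        by (simp add: pmf_h_rand_choice_fault_network_Some[OF assms True] pmf_h_rand_choice_Some
            active_set_base_network)
    next
      case False
      then have "pmf ?Q ch = 0"
        using set_pmf_bind_h_rand_choice[OF finite_Ks] Some by (auto simp: pmf_eq_0_set_pmf)
      then show ?thesis
        using assms(2) finite_Ks Some False
        by (simp add: pmf_h_rand_choice_Some active_set_base_network)
    qed
  qed
  then show "pmf ?Q ch = pmf (bind_pmf (bernoulli_pmf (r ^ card Ks))
        (\<lambda>nobody. if nobody then return_pmf None else ?Q\<^sub>0)) ch"
    unfolding mixture .
qed

lemma nn_integral_loss_h_output:
  "(\<integral>\<^sup>+ z. loss (h_output pY Psi \<theta> G (fst z) ch) (snd z) \<partial>D)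
     = case_option (\<integral>\<^sup>+ z. loss pY (snd z) \<partial>D) (\<lambda>k. agg_risk loss D Psi \<theta> k G) ch"
  by (cases ch) (simp_all add: h_output_def agg_risk_def)

lemma dyn_risk_return_pmf:
  "dyn_risk loss D pY Psi \<theta> Ks T (return_pmf G)
     = (\<integral>\<^sup>+ ch. case_option (\<integral>\<^sup>+ z. loss pY (snd z) \<partial>D) (\<lambda>k. agg_risk loss D Psi \<theta> k G) ch
          \<partial>h_rand_choice Ks T G)"
  by (simp add: dyn_risk_def nn_integral_loss_h_output)

lemma dyn_risk_lower_bound:
  assumes "finite Ks"
    and "\<forall>G \<in> set_pmf N. \<forall>k \<in> active_set Ks T G. a k \<le> agg_risk loss D Psi \<theta> k G"
  shows "(\<integral>\<^sup>+ ch. case_option (\<integral>\<^sup>+ z. loss pY (snd z) \<partial>D) a ch \<partial>bind_pmf N (h_rand_choice Ks T))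
           \<le> dyn_risk loss D pY Psi \<theta> Ks T N"
  unfolding dyn_risk_def nn_integral_bind_pmf nn_integral_loss_h_output
  using assms(2) set_pmf_h_rand_choice[OF assms(1)]
  by (intro nn_integral_mono_AE AE_pmfI) (fastforce split: option.split)

theorem proposition1:
  fixes Cb :: "'c set" and Eb :: "('c \<times> 'c) set" and Ks :: "'c set"
    and T :: nat and r :: real
    and D :: "('x \<times> ('y::finite)) measure" and pY :: "'y pmf"
    and Psi :: "'c \<Rightarrow> 'th \<Rightarrow> 'c network \<Rightarrow> 'x \<Rightarrow> 'y pmf" and \<theta> :: 'th
    and loss :: "'y pmf \<Rightarrow> 'y \<Rightarrow> ennreal"
  assumes "finite Cb" and "Eb \<subseteq> Cb \<times> Cb" and "Ks \<subseteq> Cb"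
    and "0 \<le> r" and "r \<le> 1"
    and "prob_space D"
    and "measure_pmf pY = distr D (count_space UNIV) snd"
    and "\<forall>G \<in> set_pmf (fault_network Cb Eb T r). \<forall>k \<in> active_set Ks T G.
           agg_risk loss D Psi \<theta> k G \<ge> agg_risk loss D Psi \<theta> k (base_network Cb Eb)"
  shows "dyn_risk loss D pY Psi \<theta> Ks T (fault_network Cb Eb T r)
         \<ge> ennreal (1 - r ^ card Ks) * dyn_risk loss D pY Psi \<theta> Ks T (return_pmf (base_network Cb Eb))
           + ennreal (r ^ card Ks) * (\<integral>\<^sup>+ z. loss pY (snd z) \<partial>D)"
proof -
  define L0 where "L0 = (\<integral>\<^sup>+ z. loss pY (snd z) \<partial>D)"
  define risk0 where "risk0 = case_option L0 (\<lambda>k. agg_risk loss D Psi \<theta> k (base_network Cb Eb))"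
  have "0 \<le> r ^ card Ks" "r ^ card Ks \<le> 1"
    using assms(4,5) by (auto intro: power_le_one)
  have "ennreal (1 - r ^ card Ks) * dyn_risk loss D pY Psi \<theta> Ks T (return_pmf (base_network Cb Eb))
          + ennreal (r ^ card Ks) * L0
      = ennreal (r ^ card Ks) * risk0 None
          + ennreal (1 - r ^ card Ks) * (\<integral>\<^sup>+ ch. risk0 ch \<partial>h_rand_choice Ks T (base_network Cb Eb))"
    by (simp add: dyn_risk_return_pmf risk0_def L0_def add.commute)
  also have "\<dots> = (\<integral>\<^sup>+ ch. risk0 ch \<partial>bind_pmf (fault_network Cb Eb T r) (h_rand_choice Ks T))"
    unfolding h_rand_choice_fault_network[OF assms(1,3-5)] nn_integral_bind_pmf
    using \<open>0 \<le> r ^ card Ks\<close> \<open>r ^ card Ks \<le> 1\<close> by (simp add: ac_simps)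
  also have "\<dots> \<le> dyn_risk loss D pY Psi \<theta> Ks T (fault_network Cb Eb T r)"
    unfolding risk0_def L0_def
    using assms(1,3,8) finite_subset by (intro dyn_risk_lower_bound) auto
  finally show ?thesis
    unfolding L0_def .
qed

end
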